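(* Let $K\subseteq\mathbb{R}^d$ be compact, let $f:K\to\mathbb{R}$ and $F:K\to\mathbb{R}^d$ be continuous, and let $\gamma:[a,b]\to K$ be a rectifiable path. Suppose that for all but finitely many points $x\in\gamma([a,b])$ one has $\lim_{y\to x,\,y\in K\setminus\{x\}}\frac{f(y)-f(x)-\langle F(x),y-x\rangle}{|y-x|}=0$. Then $\int_\gamma F=f(\gamma(b))-f(\gamma(a))$.
   Context: A path $\gamma:[a,b]\to K$ is a continuous map; its length is $L(\gamma)=\sup\{\sum_{j=1}^n|\gamma(t_j)-\gamma(t_{j-1})|: a=t_0<\dots<t_n=b\}$, and $\gamma$ is rectifiable if $L(\gamma)<\infty$. For continuous $F:K\to\mathbb{R}^d$ and rectifiable $\gamma$, the path integral $\int_\gamma F$ is the limit of the Riemann–Stieltjes sums $\sum_{j=1}^n\langle F(\gamma(\tau_j)),\gamma(t_j)-\gamma(t_{j-1})\rangle$ over partitions $a=t_0<\dots<t_n=b$ with mesh tending to $0$ and $t_{j-1}\le\tau_j\le t_j$. *)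

theory Defs
  imports "HOL-Analysis.Analysis"
begin

definition is_partition :: "real \<Rightarrow> real \<Rightarrow> nat \<Rightarrow> (nat \<Rightarrow> real) \<Rightarrow> bool" where
  "is_partition a b n t \<longleftrightarrow> t 0 = a \<and> t n = b \<and> (\<forall>j<n. t j < t (Suc j))"

definition rectifiable_path_on :: "real \<Rightarrow> real \<Rightarrow> (real \<Rightarrow> 'a::real_normed_vector) \<Rightarrow> bool" where
  "rectifiable_path_on a b \<gamma> \<longleftrightarrow>
     bdd_above {(\<Sum>j<n. norm (\<gamma> (t (Suc j)) - \<gamma> (t j))) | n t. is_partition a b n t}"

definition has_path_integral ::
  "('a::real_inner \<Rightarrow> 'a) \<Rightarrow> (real \<Rightarrow> 'a) \<Rightarrow> real \<Rightarrow> real \<Rightarrow> real \<Rightarrow> bool" where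
  "has_path_integral F \<gamma> a b I \<longleftrightarrow>
     (\<forall>\<epsilon>>0. \<exists>\<delta>>0. \<forall>n t \<tau>.
        is_partition a b n t \<and> (\<forall>j<n. t (Suc j) - t j < \<delta>) \<and>
        (\<forall>j<n. t j \<le> \<tau> j \<and> \<tau> j \<le> t (Suc j)) \<longrightarrow>
        \<bar>(\<Sum>j<n. F (\<gamma> (\<tau> j)) \<bullet> (\<gamma> (t (Suc j)) - \<gamma> (t j))) - I\<bar> < \<epsilon>)"

end

(*
  On a piece [p, q] tagged at an endpoint where f has gradient F along the path, the
  Riemann-Stieltjes term differs from f (\<gamma> q) - f (\<gamma> p) by at most e |\<gamma> q - \<gamma> p|, so a
  Cousin-type supremum argument covers every interval without exceptional points by a chain of
  such pieces, and rectifiability bounds the accumulated error. An exceptional value x is removed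
  by cutting at the first and last times p, q at which \<gamma> hits x: the loop between them tagged
  at p contributes nothing on either side, and the two outer intervals are approached from
  inside using continuity of f \<circ> \<gamma>. Hence every subinterval carries a chain whose sum is
  arbitrarily close to the increment of f \<circ> \<gamma>; refining a fine partition by such chains and
  using uniform continuity of F \<circ> \<gamma> on [a, b] controls its Riemann-Stieltjes sum.
*)
theory Submission
  imports Defs
begin

inductive tagged_chain :: "real \<Rightarrow> real \<Rightarrow> (real \<times> real \<times> real) list \<Rightarrow> bool" where
  Nil: "tagged_chain u u []"
| Cons: "\<lbrakk>u < w; u \<le> \<sigma>; \<sigma> \<le> w; tagged_chain w v xs\<rbrakk> \<Longrightarrow> tagged_chain u v ((u, w, \<sigma>) # xs)"

lemma tagged_chain_le: "tagged_chain u v xs \<Longrightarrow> u \<le> v"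
  by (induction rule: tagged_chain.induct) auto

lemma tagged_chain_memD:
  "tagged_chain u v xs \<Longrightarrow> (p, q, \<sigma>) \<in> set xs \<Longrightarrow> u \<le> p \<and> p \<le> \<sigma> \<and> \<sigma> \<le> q \<and> q \<le> v"
  by (induction rule: tagged_chain.induct) (auto dest: tagged_chain_le)

lemma tagged_chain_single: "u < v \<Longrightarrow> u \<le> \<sigma> \<Longrightarrow> \<sigma> \<le> v \<Longrightarrow> tagged_chain u v [(u, v, \<sigma>)]"
  by (auto intro: tagged_chain.intros)

lemma tagged_chain_append:
  "tagged_chain u w xs \<Longrightarrow> tagged_chain w v ys \<Longrightarrow> tagged_chain u v (xs @ ys)"
  by (induction rule: tagged_chain.induct) (auto intro: tagged_chain.intros)

lemma tagged_chain_snoc: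
  "tagged_chain u w xs \<Longrightarrow> w < v \<Longrightarrow> w \<le> \<sigma> \<Longrightarrow> \<sigma> \<le> v \<Longrightarrow> tagged_chain u v (xs @ [(w, v, \<sigma>)])"
  by (blast intro: tagged_chain_append tagged_chain_single)

lemma tagged_chain_concat:
  "(\<And>j. j < n \<Longrightarrow> tagged_chain (t j) (t (Suc j)) (Y j)) \<Longrightarrow>
     tagged_chain (t 0) (t n) (concat (map Y [0..<n]))"
  by (induction n) (auto intro: tagged_chain.Nil tagged_chain_append)

lemma tagged_chain_of_partition:
  assumes "is_partition a b n t" and "\<And>j. j < n \<Longrightarrow> t j \<le> \<tau> j \<and> \<tau> j \<le> t (Suc j)"
  shows "tagged_chain a b (map (\<lambda>j. (t j, t (Suc j), \<tau> j)) [0..<n])"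
proof -
  have "tagged_chain (t j) (t (Suc j)) [(t j, t (Suc j), \<tau> j)]" if "j < n" for j
    using assms that by (intro tagged_chain_single) (auto simp: is_partition_def)
  then have "tagged_chain (t 0) (t n) (concat (map (\<lambda>j. [(t j, t (Suc j), \<tau> j)]) [0..<n]))"
    by (rule tagged_chain_concat)
  then show ?thesis
    using assms(1) by (simp add: is_partition_def concat_map_singleton)
qed

lemma is_partition_bounds:
  assumes "is_partition a b n t" "j < n"
  shows "a \<le> t j" "t (Suc j) \<le> b"
proof -
  have "tagged_chain a b (map (\<lambda>j. (t j, t (Suc j), t j)) [0..<n])"
    by (rule tagged_chain_of_partition[OF assms(1)])
      (use assms(1) in \<open>auto simp: is_partition_def less_imp_le\<close>)
  moreover have "(t j, t (Suc j), t j) \<in> set (map (\<lambda>j. (t j, t (Suc j), t j)) [0..<n])"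
    using assms(2) by auto
  ultimately show "a \<le> t j" "t (Suc j) \<le> b" using tagged_chain_memD by blast+
qed

lemma partition_of_tagged_chain:
  "tagged_chain u v xs \<Longrightarrow> \<exists>t. is_partition u v (length xs) t \<and>
     (\<Sum>j<length xs. g (t j) (t (Suc j))) = (\<Sum>(p, q, \<sigma>)\<leftarrow>xs. g p q)"
proof (induction rule: tagged_chain.induct)
  case (Nil u)
  show ?case by (intro exI[of _ "\<lambda>_. u"]) (simp add: is_partition_def)
next
  case (Cons u w \<sigma> v xs)
  then obtain t where t: "is_partition w v (length xs) t"
    "(\<Sum>j<length xs. g (t j) (t (Suc j))) = (\<Sum>(p, q, \<sigma>)\<leftarrow>xs. g p q)" by blast
  define t' where "t' j = (if j = 0 then u else t (j - 1))" for j
  have "is_partition u v (length ((u, w, \<sigma>) # xs)) t'"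
    using t(1) Cons(1) by (auto simp: is_partition_def t'_def less_Suc_eq_0_disj)
  moreover have "(\<Sum>j<length ((u, w, \<sigma>) # xs). g (t' j) (t' (Suc j))) =
      g u w + (\<Sum>j<length xs. g (t j) (t (Suc j)))"
    using t(1) unfolding length_Cons sum.lessThan_Suc_shift by (simp add: t'_def is_partition_def)
  ultimately show ?case using t(2) by auto
qed

definition stieltjes_sum ::
  "(real \<Rightarrow> 'a::real_inner) \<Rightarrow> (real \<Rightarrow> 'a) \<Rightarrow> (real \<times> real \<times> real) list \<Rightarrow> real" where
  "stieltjes_sum G \<gamma> xs = (\<Sum>(p, q, \<sigma>)\<leftarrow>xs. G \<sigma> \<bullet> (\<gamma> q - \<gamma> p))"

definition chain_variation ::
  "(real \<Rightarrow> 'a::real_normed_vector) \<Rightarrow> (real \<times> real \<times> real) list \<Rightarrow> real" where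
  "chain_variation \<gamma> xs = (\<Sum>(p, q, \<sigma>)\<leftarrow>xs. norm (\<gamma> q - \<gamma> p))"

lemma stieltjes_sum_simps [simp]:
  "stieltjes_sum G \<gamma> [] = 0"
  "stieltjes_sum G \<gamma> ((p, q, \<sigma>) # xs) = G \<sigma> \<bullet> (\<gamma> q - \<gamma> p) + stieltjes_sum G \<gamma> xs"
  "stieltjes_sum G \<gamma> (xs @ ys) = stieltjes_sum G \<gamma> xs + stieltjes_sum G \<gamma> ys"
  by (simp_all add: stieltjes_sum_def)

lemma chain_variation_simps [simp]:
  "chain_variation \<gamma> [] = 0"
  "chain_variation \<gamma> ((p, q, \<sigma>) # xs) = norm (\<gamma> q - \<gamma> p) + chain_variation \<gamma> xs"
  "chain_variation \<gamma> (xs @ ys) = chain_variation \<gamma> xs + chain_variation \<gamma> ys"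
  by (simp_all add: chain_variation_def)

lemma chain_variation_nonneg: "0 \<le> chain_variation \<gamma> xs"
  unfolding chain_variation_def by (induction xs) auto

lemma chain_variation_concat:
  "chain_variation \<gamma> (concat (map Y [0..<n])) = (\<Sum>j<n. chain_variation \<gamma> (Y j))"
  by (induction n) simp_all

lemma rectifiable_chain_variation_bound:
  assumes "rectifiable_path_on a b \<gamma>"
  obtains L where "0 \<le> L"
    and "\<And>u v xs. a \<le> u \<Longrightarrow> v \<le> b \<Longrightarrow> tagged_chain u v xs \<Longrightarrow> chain_variation \<gamma> xs \<le> L"
proof -
  obtain M where M: "\<And>n t. is_partition a b n t \<Longrightarrow> (\<Sum>j<n. norm (\<gamma> (t (Suc j)) - \<gamma> (t j))) \<le> M"
    using assms unfolding rectifiable_path_on_def bdd_above_def by blast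
  have "chain_variation \<gamma> xs \<le> max M 0" if "a \<le> u" "v \<le> b" "tagged_chain u v xs" for u v xs
  proof -
    define ys where
      "ys = (if a < u then [(a, u, a)] else []) @ xs @ (if v < b then [(v, b, v)] else [])"
    have "tagged_chain a b ys"
      using that tagged_chain_le[OF that(3)] unfolding ys_def
      by (intro tagged_chain_append) (auto simp: tagged_chain_single tagged_chain.Nil)
    then obtain t where "is_partition a b (length ys) t"
      and "(\<Sum>j<length ys. norm (\<gamma> (t (Suc j)) - \<gamma> (t j))) = chain_variation \<gamma> ys"
      unfolding chain_variation_def
      using partition_of_tagged_chain[where g = "\<lambda>p q. norm (\<gamma> q - \<gamma> p)"] by blast
    then have "chain_variation \<gamma> ys \<le> M" using M by metis
    moreover have "chain_variation \<gamma> xs \<le> chain_variation \<gamma> ys"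
      using chain_variation_nonneg[of \<gamma>] by (simp add: ys_def)
    ultimately show ?thesis by linarith
  qed
  then show thesis by (intro that[of "max M 0"]) auto
qed

lemma cousin_tagged_chain:
  assumes "u \<le> v"
    and local: "\<And>c. c \<in> {u..v} \<Longrightarrow> \<exists>h>0. \<forall>s\<in>{u..v}. \<bar>s - c\<bar> < h \<longrightarrow>
                  (s < c \<longrightarrow> Q s c c) \<and> (c < s \<longrightarrow> Q c s c)"
  shows "\<exists>xs. tagged_chain u v xs \<and> (\<forall>(p, q, \<sigma>)\<in>set xs. Q p q \<sigma>)"
proof -
  define good where "good s \<longleftrightarrow> (\<exists>xs. tagged_chain u s xs \<and> (\<forall>(p, q, \<sigma>)\<in>set xs. Q p q \<sigma>))" for s
  define G where "G = {s\<in>{u..v}. good s}"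
  define c where "c = Sup G"
  have "u \<in> G" using assms(1) by (auto simp: G_def good_def intro: tagged_chain.Nil)
  have bdd: "bdd_above G" by (auto simp: G_def intro: bdd_aboveI[of _ v])
  have uc: "u \<le> c" using \<open>u \<in> G\<close> bdd unfolding c_def by (rule cSup_upper)
  have cv: "c \<le> v" unfolding c_def using \<open>u \<in> G\<close> by (intro cSup_least) (auto simp: G_def)
  obtain h where "h > 0"
    and h: "\<And>s. s \<in> {u..v} \<Longrightarrow> \<bar>s - c\<bar> < h \<Longrightarrow> (s < c \<longrightarrow> Q s c c) \<and> (c < s \<longrightarrow> Q c s c)"
    using local[of c] uc cv by auto
  obtain s where "s \<in> G" "c - h < s"
    using less_cSup_iff[of G "c - h"] \<open>u \<in> G\<close> bdd \<open>h > 0\<close> by (auto simp: c_def)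
  have "s \<le> c" unfolding c_def using \<open>s \<in> G\<close> bdd by (rule cSup_upper)
  have "good c"
  proof (cases "s = c")
    case True
    with \<open>s \<in> G\<close> show ?thesis by (simp add: G_def)
  next
    case False
    obtain xs where "tagged_chain u s xs" "\<forall>(p, q, \<sigma>)\<in>set xs. Q p q \<sigma>"
      using \<open>s \<in> G\<close> by (auto simp: G_def good_def)
    moreover have "Q s c c" using h[of s] \<open>s \<in> G\<close> \<open>c - h < s\<close> \<open>s \<le> c\<close> False by (auto simp: G_def)
    ultimately show ?thesis
      unfolding good_def using False \<open>s \<le> c\<close>
      by (intro exI[of _ "xs @ [(s, c, c)]"]) (auto intro: tagged_chain_snoc)
  qed
  have "c = v"
  proof (rule ccontr)
    assume "c \<noteq> v"
    define c' where "c' = min v (c + h/2)"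
    have "c < c'" "c' \<le> v" using \<open>c \<noteq> v\<close> cv \<open>h > 0\<close> by (auto simp: c'_def)
    obtain xs where "tagged_chain u c xs" "\<forall>(p, q, \<sigma>)\<in>set xs. Q p q \<sigma>"
      using \<open>good c\<close> by (auto simp: good_def)
    moreover have "Q c c' c" using h[of c'] \<open>c < c'\<close> \<open>c' \<le> v\<close> uc \<open>h > 0\<close> by (auto simp: c'_def)
    ultimately have "good c'"
      unfolding good_def using \<open>c < c'\<close>
      by (intro exI[of _ "xs @ [(c, c', c)]"]) (auto intro: tagged_chain_snoc)
    then have "c' \<le> c"
      unfolding c_def using uc \<open>c < c'\<close> \<open>c' \<le> v\<close> bdd by (intro cSup_upper) (auto simp: G_def)
    with \<open>c < c'\<close> show False by simp
  qed
  with \<open>good c\<close> show ?thesis by (simp add: good_def)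
qed

lemma stieltjes_sum_error_le:
  assumes "tagged_chain u v xs"
    and "\<And>p q \<sigma>. (p, q, \<sigma>) \<in> set xs \<Longrightarrow> \<bar>\<phi> q - \<phi> p - G \<sigma> \<bullet> (\<gamma> q - \<gamma> p)\<bar> \<le> e * norm (\<gamma> q - \<gamma> p)"
  shows "\<bar>stieltjes_sum G \<gamma> xs - (\<phi> v - \<phi> u)\<bar> \<le> e * chain_variation \<gamma> xs"
  using assms
proof (induction rule: tagged_chain.induct)
  case (Nil u)
  then show ?case by simp
next
  case (Cons u w \<sigma> v xs)
  have "\<bar>G \<sigma> \<bullet> (\<gamma> w - \<gamma> u) - (\<phi> w - \<phi> u)\<bar> \<le> e * norm (\<gamma> w - \<gamma> u)"
    using Cons.prems[of u w \<sigma>] by (simp add: abs_minus_commute)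
  moreover have "\<bar>stieltjes_sum G \<gamma> xs - (\<phi> v - \<phi> w)\<bar> \<le> e * chain_variation \<gamma> xs"
    using Cons by simp
  ultimately show ?case by (simp add: distrib_left abs_le_iff)
qed

lemma stieltjes_sum_near_constant_tag:
  fixes c :: "'a::real_inner"
  assumes "tagged_chain u v xs" and "\<And>r. r \<in> {u..v} \<Longrightarrow> norm (G r - c) \<le> \<eta>"
  shows "\<bar>stieltjes_sum G \<gamma> xs - c \<bullet> (\<gamma> v - \<gamma> u)\<bar> \<le> \<eta> * chain_variation \<gamma> xs"
proof -
  have "\<bar>c \<bullet> \<gamma> q - c \<bullet> \<gamma> p - G \<sigma> \<bullet> (\<gamma> q - \<gamma> p)\<bar> \<le> \<eta> * norm (\<gamma> q - \<gamma> p)"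
    if "(p, q, \<sigma>) \<in> set xs" for p q \<sigma>
  proof -
    have "u \<le> \<sigma> \<and> \<sigma> \<le> v" using tagged_chain_memD[OF assms(1) that] by linarith
    then have "norm (c - G \<sigma>) \<le> \<eta>" using assms(2) by (simp add: norm_minus_commute)
    moreover have "c \<bullet> \<gamma> q - c \<bullet> \<gamma> p - G \<sigma> \<bullet> (\<gamma> q - \<gamma> p) = (c - G \<sigma>) \<bullet> (\<gamma> q - \<gamma> p)"
      by (simp add: inner_diff_left inner_diff_right)
    ultimately show ?thesis
      by (metis Cauchy_Schwarz_ineq2 mult_right_mono norm_ge_zero order_trans)
  qed
  then show ?thesis
    using stieltjes_sum_error_le[OF assms(1), where \<phi> = "\<lambda>s. c \<bullet> \<gamma> s" and G = G and \<gamma> = \<gamma>]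
    by (simp add: inner_diff_right)
qed

definition has_gradient_along ::
  "('a::real_inner \<Rightarrow> real) \<Rightarrow> ('a \<Rightarrow> 'a) \<Rightarrow> (real \<Rightarrow> 'a) \<Rightarrow> real set \<Rightarrow> real \<Rightarrow> bool" where
  "has_gradient_along f F \<gamma> S c \<longleftrightarrow> (\<forall>e>0. \<forall>\<^sub>F s in at c within S.
     \<bar>f (\<gamma> s) - f (\<gamma> c) - F (\<gamma> c) \<bullet> (\<gamma> s - \<gamma> c)\<bar> \<le> e * norm (\<gamma> s - \<gamma> c))"

lemma has_gradient_along_tagged_chain:
  assumes "a \<le> u" "u \<le> v" "v \<le> b" "e > 0"
    and "\<And>c. c \<in> {u..v} \<Longrightarrow> has_gradient_along f F \<gamma> {a..b} c"
  shows "\<exists>xs. tagged_chain u v xs \<and>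
    \<bar>stieltjes_sum (\<lambda>s. F (\<gamma> s)) \<gamma> xs - (f (\<gamma> v) - f (\<gamma> u))\<bar> \<le> e * chain_variation \<gamma> xs"
proof -
  define Q where "Q p q \<sigma> \<longleftrightarrow>
    \<bar>f (\<gamma> q) - f (\<gamma> p) - F (\<gamma> \<sigma>) \<bullet> (\<gamma> q - \<gamma> p)\<bar> \<le> e * norm (\<gamma> q - \<gamma> p)" for p q \<sigma>
  have "\<exists>h>0. \<forall>s\<in>{u..v}. \<bar>s - c\<bar> < h \<longrightarrow> (s < c \<longrightarrow> Q s c c) \<and> (c < s \<longrightarrow> Q c s c)"
    if c: "c \<in> {u..v}" for c
  proof -
    obtain h where "h > 0" and h: "\<And>s. s \<in> {a..b} \<Longrightarrow> s \<noteq> c \<Longrightarrow> dist s c < h \<Longrightarrow> Q c s c"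
      using assms(4) assms(5)[OF c] unfolding has_gradient_along_def eventually_at Q_def by blast
    have "Q s c c \<longleftrightarrow> Q c s c" for s
      unfolding Q_def by (simp add: norm_minus_commute inner_diff_right abs_le_iff) argo
    then show ?thesis
      using h \<open>h > 0\<close> assms(1,3) by (intro exI[of _ h]) (auto simp: dist_real_def)
  qed
  then obtain xs where "tagged_chain u v xs" "\<forall>(p, q, \<sigma>)\<in>set xs. Q p q \<sigma>"
    using cousin_tagged_chain[OF assms(2)] by blast
  moreover from this(2) have "\<bar>stieltjes_sum (\<lambda>s. F (\<gamma> s)) \<gamma> xs - (f (\<gamma> v) - f (\<gamma> u))\<bar>
      \<le> e * chain_variation \<gamma> xs"
    by (intro stieltjes_sum_error_le[OF \<open>tagged_chain u v xs\<close>]) (auto simp: Q_def)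
  ultimately show ?thesis by blast
qed

lemma first_last_hitting_time:
  fixes \<gamma> :: "real \<Rightarrow> 'a::t1_space"
  assumes "continuous_on {u..v} \<gamma>" and "x \<in> \<gamma> ` {u..v}"
  obtains p q where "u \<le> p" "p \<le> q" "q \<le> v" "\<gamma> p = x" "\<gamma> q = x"
    and "\<And>s. s < p \<Longrightarrow> x \<notin> \<gamma> ` {u..s}" and "\<And>s. q < s \<Longrightarrow> x \<notin> \<gamma> ` {s..v}"
proof -
  define T where "T = {s \<in> {u..v}. \<gamma> s = x}"
  have "closed T" unfolding T_def
    using assms(1) by (rule continuous_closed_preimage_constant) simp
  moreover have "bounded T" by (rule bounded_subset[of "{u..v}"]) (auto simp: T_def)
  ultimately have "compact T" by (simp add: compact_eq_bounded_closed)
  moreover have "T \<noteq> {}" using assms(2) by (auto simp: T_def)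
  ultimately obtain p q where "p \<in> T" "q \<in> T" and bounds: "\<And>s. s \<in> T \<Longrightarrow> p \<le> s \<and> s \<le> q"
    using compact_attains_inf[of T] compact_attains_sup[of T] by metis
  then have pq: "u \<le> p" "p \<le> q" "q \<le> v" "\<gamma> p = x" "\<gamma> q = x" by (auto simp: T_def)
  have "x \<notin> \<gamma> ` {u..s}" if "s < p" for s
  proof
    assume "x \<in> \<gamma> ` {u..s}"
    then obtain r where "r \<in> {u..s}" "\<gamma> r = x" by blast
    then show False using bounds[of r] that pq by (auto simp: T_def)
  qed
  moreover have "x \<notin> \<gamma> ` {s..v}" if "q < s" for s
  proof
    assume "x \<in> \<gamma> ` {s..v}"
    then obtain r where "r \<in> {s..v}" "\<gamma> r = x" by blast
    then show False using bounds[of r] that pq by (auto simp: T_def)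
  qed
  ultimately show thesis using pq by (intro that)
qed

text \<open>The final piece [s, p] tagged at p is off by exactly \<psi> s - \<psi> p, where \<psi> = \<phi> - G p \<bullet> \<gamma>.\<close>

lemma tagged_chain_approx_at_left:
  assumes "u \<le> p" "e > 0" and cont: "continuous_on {u..p} (\<lambda>s. \<phi> s - G p \<bullet> \<gamma> s)"
    and approx: "\<And>s e. u \<le> s \<Longrightarrow> s < p \<Longrightarrow> e > 0 \<Longrightarrow>
                   \<exists>xs. tagged_chain u s xs \<and> \<bar>stieltjes_sum G \<gamma> xs - (\<phi> s - \<phi> u)\<bar> \<le> e"
  shows "\<exists>xs. tagged_chain u p xs \<and> \<bar>stieltjes_sum G \<gamma> xs - (\<phi> p - \<phi> u)\<bar> \<le> e"
proof (cases "u = p")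
  case True
  then show ?thesis using \<open>e > 0\<close> by (intro exI[of _ "[]"]) (auto intro: tagged_chain.Nil)
next
  case False
  obtain d where "d > 0" and d: "\<And>s. s \<in> {u..p} \<Longrightarrow> dist s p < d \<Longrightarrow>
      \<bar>(\<phi> s - G p \<bullet> \<gamma> s) - (\<phi> p - G p \<bullet> \<gamma> p)\<bar> < e / 2"
    using cont \<open>u \<le> p\<close> \<open>e > 0\<close> unfolding continuous_on_iff dist_real_def
    by (metis atLeastAtMost_iff half_gt_zero order_refl)
  define s where "s = max u (p - d / 2)"
  have s: "u \<le> s" "s < p" using False \<open>u \<le> p\<close> \<open>d > 0\<close> by (auto simp: s_def)
  obtain xs where xs: "tagged_chain u s xs" "\<bar>stieltjes_sum G \<gamma> xs - (\<phi> s - \<phi> u)\<bar> \<le> e / 2"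
    using approx[OF s] \<open>e > 0\<close> by (meson half_gt_zero)
  have "\<bar>(\<phi> s - G p \<bullet> \<gamma> s) - (\<phi> p - G p \<bullet> \<gamma> p)\<bar> < e / 2"
    using d[of s] s \<open>d > 0\<close> by (auto simp: s_def dist_real_def)
  then have "\<bar>stieltjes_sum G \<gamma> (xs @ [(s, p, p)]) - (\<phi> p - \<phi> u)\<bar> \<le> e"
    using xs(2) by (simp add: inner_diff_right abs_le_iff) argo
  moreover have "tagged_chain u p (xs @ [(s, p, p)])"
    using tagged_chain_snoc[OF xs(1) s(2)] s(2) by simp
  ultimately show ?thesis by blast
qed

lemma tagged_chain_approx_at_right:
  assumes "q \<le> v" "e > 0" and cont: "continuous_on {q..v} (\<lambda>s. \<phi> s - G q \<bullet> \<gamma> s)"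
    and approx: "\<And>s e. q < s \<Longrightarrow> s \<le> v \<Longrightarrow> e > 0 \<Longrightarrow>
                   \<exists>xs. tagged_chain s v xs \<and> \<bar>stieltjes_sum G \<gamma> xs - (\<phi> v - \<phi> s)\<bar> \<le> e"
  shows "\<exists>xs. tagged_chain q v xs \<and> \<bar>stieltjes_sum G \<gamma> xs - (\<phi> v - \<phi> q)\<bar> \<le> e"
proof (cases "q = v")
  case True
  then show ?thesis using \<open>e > 0\<close> by (intro exI[of _ "[]"]) (auto intro: tagged_chain.Nil)
next
  case False
  obtain d where "d > 0" and d: "\<And>s. s \<in> {q..v} \<Longrightarrow> dist s q < d \<Longrightarrow>
      \<bar>(\<phi> s - G q \<bullet> \<gamma> s) - (\<phi> q - G q \<bullet> \<gamma> q)\<bar> < e / 2"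
    using cont \<open>q \<le> v\<close> \<open>e > 0\<close> unfolding continuous_on_iff dist_real_def
    by (metis atLeastAtMost_iff half_gt_zero order_refl)
  define s where "s = min v (q + d / 2)"
  have s: "q < s" "s \<le> v" using False \<open>q \<le> v\<close> \<open>d > 0\<close> by (auto simp: s_def)
  obtain xs where xs: "tagged_chain s v xs" "\<bar>stieltjes_sum G \<gamma> xs - (\<phi> v - \<phi> s)\<bar> \<le> e / 2"
    using approx[OF s] \<open>e > 0\<close> by (meson half_gt_zero)
  have "\<bar>(\<phi> s - G q \<bullet> \<gamma> s) - (\<phi> q - G q \<bullet> \<gamma> q)\<bar> < e / 2"
    using d[of s] s \<open>d > 0\<close> by (auto simp: s_def dist_real_def)
  then have "\<bar>stieltjes_sum G \<gamma> ((q, s, q) # xs) - (\<phi> v - \<phi> q)\<bar> \<le> e"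
    using xs(2) by (simp add: inner_diff_right abs_le_iff) argo
  then show ?thesis using tagged_chain.Cons[OF s(1) order_refl less_imp_le[OF s(1)] xs(1)] by auto
qed

lemma tagged_chain_approx_through_point:
  fixes \<gamma> :: "real \<Rightarrow> 'a::real_inner"
  assumes "u \<le> v" "e > 0"
    and cont_\<gamma>: "continuous_on {u..v} \<gamma>" and cont_f: "continuous_on {u..v} (\<lambda>s. f (\<gamma> s))"
    and avoiding: "\<And>u' v' e'. u \<le> u' \<Longrightarrow> u' \<le> v' \<Longrightarrow> v' \<le> v \<Longrightarrow> x \<notin> \<gamma> ` {u'..v'} \<Longrightarrow> e' > 0 \<Longrightarrow>
       \<exists>xs. tagged_chain u' v' xs \<and> \<bar>stieltjes_sum (\<lambda>s. F (\<gamma> s)) \<gamma> xs - (f (\<gamma> v') - f (\<gamma> u'))\<bar> \<le> e'"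
  shows "\<exists>xs. tagged_chain u v xs \<and> \<bar>stieltjes_sum (\<lambda>s. F (\<gamma> s)) \<gamma> xs - (f (\<gamma> v) - f (\<gamma> u))\<bar> \<le> e"
proof (cases "x \<in> \<gamma> ` {u..v}")
  case False
  then show ?thesis using avoiding[of u v e] assms(1,2) by blast
next
  case True
  obtain p q where pq: "u \<le> p" "p \<le> q" "q \<le> v" "\<gamma> p = x" "\<gamma> q = x"
    and before: "\<And>s. s < p \<Longrightarrow> x \<notin> \<gamma> ` {u..s}" and after: "\<And>s. q < s \<Longrightarrow> x \<notin> \<gamma> ` {s..v}"
    using first_last_hitting_time[OF cont_\<gamma> True] by blast
  have cont_tag: "continuous_on {u..v} (\<lambda>s. f (\<gamma> s) - F x \<bullet> \<gamma> s)"
    using cont_\<gamma> cont_f by (intro continuous_intros)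
  have "\<exists>xs. tagged_chain u p xs \<and>
      \<bar>stieltjes_sum (\<lambda>s. F (\<gamma> s)) \<gamma> xs - (f (\<gamma> p) - f (\<gamma> u))\<bar> \<le> e / 2"
  proof (rule tagged_chain_approx_at_left[where \<phi> = "\<lambda>s. f (\<gamma> s)" and G = "\<lambda>s. F (\<gamma> s)"])
    show "continuous_on {u..p} (\<lambda>s. f (\<gamma> s) - F (\<gamma> p) \<bullet> \<gamma> s)"
      using continuous_on_subset[OF cont_tag, of "{u..p}"] pq by simp
    show "\<exists>xs. tagged_chain u s xs \<and> \<bar>stieltjes_sum (\<lambda>s. F (\<gamma> s)) \<gamma> xs - (f (\<gamma> s) - f (\<gamma> u))\<bar> \<le> e'"
      if "u \<le> s" "s < p" "e' > 0" for s e'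
      using avoiding[of u s e'] before[OF that(2)] that pq(2,3) by simp
  qed (use pq \<open>e > 0\<close> in auto)
  then obtain xs where xs: "tagged_chain u p xs"
    "\<bar>stieltjes_sum (\<lambda>s. F (\<gamma> s)) \<gamma> xs - (f (\<gamma> p) - f (\<gamma> u))\<bar> \<le> e / 2" by blast
  have "\<exists>zs. tagged_chain q v zs \<and>
      \<bar>stieltjes_sum (\<lambda>s. F (\<gamma> s)) \<gamma> zs - (f (\<gamma> v) - f (\<gamma> q))\<bar> \<le> e / 2"
  proof (rule tagged_chain_approx_at_right[where \<phi> = "\<lambda>s. f (\<gamma> s)" and G = "\<lambda>s. F (\<gamma> s)"])
    show "continuous_on {q..v} (\<lambda>s. f (\<gamma> s) - F (\<gamma> q) \<bullet> \<gamma> s)"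
      using continuous_on_subset[OF cont_tag, of "{q..v}"] pq by simp
    show "\<exists>zs. tagged_chain s v zs \<and> \<bar>stieltjes_sum (\<lambda>s. F (\<gamma> s)) \<gamma> zs - (f (\<gamma> v) - f (\<gamma> s))\<bar> \<le> e'"
      if "q < s" "s \<le> v" "e' > 0" for s e'
      using avoiding[of s v e'] after[OF that(1)] that pq(1,2) by simp
  qed (use pq \<open>e > 0\<close> in auto)
  then obtain zs where zs: "tagged_chain q v zs"
    "\<bar>stieltjes_sum (\<lambda>s. F (\<gamma> s)) \<gamma> zs - (f (\<gamma> v) - f (\<gamma> q))\<bar> \<le> e / 2" by blast
  \<comment> \<open>Tagging the loop from p to q at p costs nothing, since both ends sit at x.\<close>
  define ys where "ys = (if p < q then [(p, q, p)] else [])"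
  have "tagged_chain p q ys" using pq(2) by (auto simp: ys_def intro: tagged_chain.intros)
  then have "tagged_chain u v (xs @ ys @ zs)" using xs(1) zs(1) by (blast intro: tagged_chain_append)
  moreover have "stieltjes_sum (\<lambda>s. F (\<gamma> s)) \<gamma> ys = 0" using pq by (simp add: ys_def)
  moreover have "f (\<gamma> q) = f (\<gamma> p)" using pq(4,5) by simp
  with xs(2) zs(2) have "\<bar>stieltjes_sum (\<lambda>s. F (\<gamma> s)) \<gamma> xs + stieltjes_sum (\<lambda>s. F (\<gamma> s)) \<gamma> zs
      - (f (\<gamma> v) - f (\<gamma> u))\<bar> \<le> e"
    unfolding abs_le_iff by linarith
  ultimately show ?thesis by (intro exI[of _ "xs @ ys @ zs"]) simp
qed

lemma tagged_chain_approx: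
  fixes \<gamma> :: "real \<Rightarrow> 'a::real_inner"
  assumes variation: "\<And>u v xs. a \<le> u \<Longrightarrow> v \<le> b \<Longrightarrow> tagged_chain u v xs \<Longrightarrow> chain_variation \<gamma> xs \<le> L"
    and cont_\<gamma>: "continuous_on {a..b} \<gamma>" and cont_f: "continuous_on {a..b} (\<lambda>s. f (\<gamma> s))"
    and "finite S"
    and gradient: "\<And>c. c \<in> {u..v} \<Longrightarrow> \<gamma> c \<notin> S \<Longrightarrow> has_gradient_along f F \<gamma> {a..b} c"
    and "a \<le> u" "u \<le> v" "v \<le> b" "e > 0"
  shows "\<exists>xs. tagged_chain u v xs \<and> \<bar>stieltjes_sum (\<lambda>s. F (\<gamma> s)) \<gamma> xs - (f (\<gamma> v) - f (\<gamma> u))\<bar> \<le> e"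
  using \<open>finite S\<close> gradient \<open>a \<le> u\<close> \<open>u \<le> v\<close> \<open>v \<le> b\<close> \<open>e > 0\<close>
proof (induction S arbitrary: u v e rule: finite_induct)
  case (empty u v e)
  have "0 \<le> L" using variation[of a a "[]"] \<open>a \<le> u\<close> \<open>u \<le> v\<close> \<open>v \<le> b\<close> by (auto intro: tagged_chain.Nil)
  then obtain xs where xs: "tagged_chain u v xs"
    "\<bar>stieltjes_sum (\<lambda>s. F (\<gamma> s)) \<gamma> xs - (f (\<gamma> v) - f (\<gamma> u))\<bar> \<le> e / (L + 1) * chain_variation \<gamma> xs"
    using has_gradient_along_tagged_chain[of a u v b "e / (L + 1)" f F \<gamma>] empty by auto
  have "e / (L + 1) * chain_variation \<gamma> xs \<le> e / (L + 1) * (L + 1)"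
    using variation[OF \<open>a \<le> u\<close> \<open>v \<le> b\<close> xs(1)] \<open>0 \<le> L\<close> \<open>e > 0\<close> by (intro mult_left_mono) auto
  then show ?case using xs \<open>0 \<le> L\<close> by auto
next
  case (insert x S u v e)
  show ?case
  proof (rule tagged_chain_approx_through_point[where x = x])
    show "continuous_on {u..v} \<gamma>" "continuous_on {u..v} (\<lambda>s. f (\<gamma> s))"
      using continuous_on_subset[OF cont_\<gamma>] continuous_on_subset[OF cont_f] insert.prems by auto
    fix u' v' e' :: real
    assume sub: "u \<le> u'" "u' \<le> v'" "v' \<le> v" and avoid: "x \<notin> \<gamma> ` {u'..v'}" and "e' > 0"
    show "\<exists>xs. tagged_chain u' v' xs \<and>
        \<bar>stieltjes_sum (\<lambda>s. F (\<gamma> s)) \<gamma> xs - (f (\<gamma> v') - f (\<gamma> u'))\<bar> \<le> e'"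
    proof (rule insert.IH)
      fix c assume c: "c \<in> {u'..v'}" "\<gamma> c \<notin> S"
      have "c \<in> {u..v}" using c(1) sub by auto
      moreover have "\<gamma> c \<noteq> x" using c(1) avoid by blast
      ultimately show "has_gradient_along f F \<gamma> {a..b} c" using insert.prems(1) c(2) by blast
    qed (use sub \<open>e' > 0\<close> insert.prems in auto)
  qed (use insert.prems in auto)
qed

lemma riemann_stieltjes_sum_estimate:
  fixes \<gamma> :: "real \<Rightarrow> 'a::real_inner"
  assumes partition: "is_partition a b n t" and tags: "\<And>j. j < n \<Longrightarrow> t j \<le> \<tau> j \<and> \<tau> j \<le> t (Suc j)"
    and variation: "\<And>u v xs. a \<le> u \<Longrightarrow> v \<le> b \<Longrightarrow> tagged_chain u v xs \<Longrightarrow> chain_variation \<gamma> xs \<le> L"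
    and approx: "\<And>u v. a \<le> u \<Longrightarrow> u \<le> v \<Longrightarrow> v \<le> b \<Longrightarrow>
                   \<exists>xs. tagged_chain u v xs \<and> \<bar>stieltjes_sum G \<gamma> xs - (\<phi> v - \<phi> u)\<bar> \<le> \<epsilon>"
    and "0 \<le> \<eta>" and near: "\<And>j r. j < n \<Longrightarrow> r \<in> {t j..t (Suc j)} \<Longrightarrow> norm (G r - G (\<tau> j)) \<le> \<eta>"
  shows "\<bar>(\<Sum>j<n. G (\<tau> j) \<bullet> (\<gamma> (t (Suc j)) - \<gamma> (t j))) - (\<phi> b - \<phi> a)\<bar> \<le> n * \<epsilon> + \<eta> * L"
proof -
  have "a \<le> t j \<and> t j \<le> t (Suc j) \<and> t (Suc j) \<le> b" if "j < n" for j
    using is_partition_bounds[OF partition that] partition that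
    by (auto simp: is_partition_def less_imp_le)
  then have "\<forall>j<n. \<exists>ys. tagged_chain (t j) (t (Suc j)) ys \<and>
      \<bar>stieltjes_sum G \<gamma> ys - (\<phi> (t (Suc j)) - \<phi> (t j))\<bar> \<le> \<epsilon>"
    using approx by blast
  then obtain Y where Y: "\<And>j. j < n \<Longrightarrow> tagged_chain (t j) (t (Suc j)) (Y j) \<and>
      \<bar>stieltjes_sum G \<gamma> (Y j) - (\<phi> (t (Suc j)) - \<phi> (t j))\<bar> \<le> \<epsilon>"
    by metis
  have piece: "\<bar>G (\<tau> j) \<bullet> (\<gamma> (t (Suc j)) - \<gamma> (t j)) - (\<phi> (t (Suc j)) - \<phi> (t j))\<bar>
      \<le> \<epsilon> + \<eta> * chain_variation \<gamma> (Y j)" if "j < n" for j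
  proof -
    have "\<bar>stieltjes_sum G \<gamma> (Y j) - G (\<tau> j) \<bullet> (\<gamma> (t (Suc j)) - \<gamma> (t j))\<bar>
        \<le> \<eta> * chain_variation \<gamma> (Y j)"
      using stieltjes_sum_near_constant_tag[OF conjunct1[OF Y[OF that]] near[OF that]] .
    then show ?thesis using Y[OF that] by (simp add: abs_le_iff)
  qed
  have "tagged_chain a b (concat (map Y [0..<n]))"
    using tagged_chain_concat[of n t Y] Y partition by (simp add: is_partition_def)
  then have "(\<Sum>j<n. chain_variation \<gamma> (Y j)) \<le> L"
    using variation[of a b] by (simp flip: chain_variation_concat)
  have "\<phi> b - \<phi> a = (\<Sum>j<n. \<phi> (t (Suc j)) - \<phi> (t j))"
    using partition sum_lessThan_telescope[of "\<lambda>j. \<phi> (t j)" n] by (simp add: is_partition_def)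
  then have "\<bar>(\<Sum>j<n. G (\<tau> j) \<bullet> (\<gamma> (t (Suc j)) - \<gamma> (t j))) - (\<phi> b - \<phi> a)\<bar>
      = \<bar>\<Sum>j<n. G (\<tau> j) \<bullet> (\<gamma> (t (Suc j)) - \<gamma> (t j)) - (\<phi> (t (Suc j)) - \<phi> (t j))\<bar>"
    by (simp add: sum_subtractf)
  also have "\<dots> \<le> (\<Sum>j<n. \<epsilon> + \<eta> * chain_variation \<gamma> (Y j))"
    using piece by (intro order_trans[OF sum_abs] sum_mono) auto
  also have "\<dots> = n * \<epsilon> + \<eta> * (\<Sum>j<n. chain_variation \<gamma> (Y j))"
    by (simp add: sum.distrib sum_distrib_left)
  also have "\<dots> \<le> n * \<epsilon> + \<eta> * L"
    using \<open>(\<Sum>j<n. chain_variation \<gamma> (Y j)) \<le> L\<close> \<open>0 \<le> \<eta>\<close> by (simp add: mult_left_mono)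
  finally show ?thesis .
qed

lemma has_gradient_along_tendsto:
  assumes lim: "((\<lambda>y. (f y - f x - F x \<bullet> (y - x)) / norm (y - x)) \<longlongrightarrow> 0) (at x within K)"
    and "continuous_on S \<gamma>" "\<gamma> ` S \<subseteq> K" "c \<in> S" "\<gamma> c = x"
  shows "has_gradient_along f F \<gamma> S c"
  unfolding has_gradient_along_def
proof (intro allI impI)
  fix e :: real assume "e > 0"
  obtain r where "r > 0" and r: "\<And>y. y \<in> K \<Longrightarrow> y \<noteq> x \<Longrightarrow> dist y x < r \<Longrightarrow>
      \<bar>(f y - f x - F x \<bullet> (y - x)) / norm (y - x)\<bar> < e"
    using tendstoD[OF lim \<open>e > 0\<close>] unfolding eventually_at by auto
  obtain d where "d > 0" and d: "\<And>s. s \<in> S \<Longrightarrow> dist s c < d \<Longrightarrow> dist (\<gamma> s) x < r"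
    using assms(2,4,5) \<open>r > 0\<close> unfolding continuous_on_iff by blast
  show "\<forall>\<^sub>F s in at c within S. \<bar>f (\<gamma> s) - f (\<gamma> c) - F (\<gamma> c) \<bullet> (\<gamma> s - \<gamma> c)\<bar> \<le> e * norm (\<gamma> s - \<gamma> c)"
    unfolding eventually_at
  proof (intro exI[of _ d] conjI \<open>d > 0\<close> ballI impI)
    fix s assume "s \<in> S" and "s \<noteq> c \<and> dist s c < d"
    show "\<bar>f (\<gamma> s) - f (\<gamma> c) - F (\<gamma> c) \<bullet> (\<gamma> s - \<gamma> c)\<bar> \<le> e * norm (\<gamma> s - \<gamma> c)"
    proof (cases "\<gamma> s = x")
      case False
      then have "\<bar>(f (\<gamma> s) - f x - F x \<bullet> (\<gamma> s - x)) / norm (\<gamma> s - x)\<bar> < e"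
        using r[of "\<gamma> s"] d[of s] \<open>s \<in> S\<close> \<open>s \<noteq> c \<and> dist s c < d\<close> assms(3) by auto
      then show ?thesis using False \<open>\<gamma> c = x\<close> by (simp add: divide_less_eq)
    qed (use \<open>\<gamma> c = x\<close> in simp)
  qed
qed

theorem has_path_integral_gradient:
  fixes \<gamma> :: "real \<Rightarrow> 'a::real_inner"
  assumes cont_\<gamma>: "continuous_on {a..b} \<gamma>" and "rectifiable_path_on a b \<gamma>"
    and cont_f: "continuous_on {a..b} (\<lambda>s. f (\<gamma> s))" and cont_F: "continuous_on {a..b} (\<lambda>s. F (\<gamma> s))"
    and "finite S" and gradient: "\<And>c. c \<in> {a..b} \<Longrightarrow> \<gamma> c \<notin> S \<Longrightarrow> has_gradient_along f F \<gamma> {a..b} c"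
  shows "has_path_integral F \<gamma> a b (f (\<gamma> b) - f (\<gamma> a))"
  unfolding has_path_integral_def
proof (intro allI impI)
  fix \<epsilon> :: real assume "\<epsilon> > 0"
  obtain L where "0 \<le> L" and variation:
      "\<And>u v xs. a \<le> u \<Longrightarrow> v \<le> b \<Longrightarrow> tagged_chain u v xs \<Longrightarrow> chain_variation \<gamma> xs \<le> L"
    using rectifiable_chain_variation_bound[OF \<open>rectifiable_path_on a b \<gamma>\<close>] by blast
  define \<eta> where "\<eta> = \<epsilon> / (2 * (L + 1))"
  have "\<eta> > 0" using \<open>\<epsilon> > 0\<close> \<open>0 \<le> L\<close> by (simp add: \<eta>_def)
  obtain d where "d > 0" and d: "\<And>r s. r \<in> {a..b} \<Longrightarrow> s \<in> {a..b} \<Longrightarrow> dist r s < d \<Longrightarrow>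
      dist (F (\<gamma> r)) (F (\<gamma> s)) < \<eta>"
    using compact_uniformly_continuous[OF cont_F compact_Icc] \<open>\<eta> > 0\<close>
    unfolding uniformly_continuous_on_def by metis
  show "\<exists>\<delta>>0. \<forall>n t \<tau>. is_partition a b n t \<and> (\<forall>j<n. t (Suc j) - t j < \<delta>) \<and>
      (\<forall>j<n. t j \<le> \<tau> j \<and> \<tau> j \<le> t (Suc j)) \<longrightarrow>
      \<bar>(\<Sum>j<n. F (\<gamma> (\<tau> j)) \<bullet> (\<gamma> (t (Suc j)) - \<gamma> (t j))) - (f (\<gamma> b) - f (\<gamma> a))\<bar> < \<epsilon>"
  proof (intro exI[of _ d] conjI allI impI \<open>d > 0\<close>, elim conjE)
    fix n t \<tau> assume partition: "is_partition a b n t" and mesh: "\<forall>j<n. t (Suc j) - t j < d"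
      and tags: "\<forall>j<n. t j \<le> \<tau> j \<and> \<tau> j \<le> t (Suc j)"
    have tags': "\<And>j. j < n \<Longrightarrow> t j \<le> \<tau> j \<and> \<tau> j \<le> t (Suc j)" using tags by blast
    have near: "norm (F (\<gamma> r) - F (\<gamma> (\<tau> j))) \<le> \<eta>" if "j < n" "r \<in> {t j..t (Suc j)}" for j r
    proof -
      have "r \<in> {a..b}" "\<tau> j \<in> {a..b}" "dist r (\<tau> j) < d"
        using is_partition_bounds[OF partition that(1)] tags'[OF that(1)] mesh that
        by (auto simp: dist_real_def)
      then show ?thesis using d[of r "\<tau> j"] by (simp add: dist_norm)
    qed
    have approx: "\<exists>xs. tagged_chain u v xs \<and>
        \<bar>stieltjes_sum (\<lambda>s. F (\<gamma> s)) \<gamma> xs - (f (\<gamma> v) - f (\<gamma> u))\<bar> \<le> \<epsilon> / (2 * (n + 1))"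
      if "a \<le> u" "u \<le> v" "v \<le> b" for u v
    proof (rule tagged_chain_approx[OF variation cont_\<gamma> cont_f \<open>finite S\<close> _ that])
      show "\<epsilon> / (2 * (n + 1)) > 0" using \<open>\<epsilon> > 0\<close> by simp
      fix c assume "c \<in> {u..v}" "\<gamma> c \<notin> S"
      then show "has_gradient_along f F \<gamma> {a..b} c" using gradient that by auto
    qed
    have "\<bar>(\<Sum>j<n. F (\<gamma> (\<tau> j)) \<bullet> (\<gamma> (t (Suc j)) - \<gamma> (t j))) - (f (\<gamma> b) - f (\<gamma> a))\<bar>
        \<le> n * (\<epsilon> / (2 * (n + 1))) + \<eta> * L"
      by (rule riemann_stieltjes_sum_estimate[OF partition tags' variation approx _ near])
        (use \<open>\<eta> > 0\<close> in auto)
    also have "\<dots> < \<epsilon> / 2 + \<epsilon> / 2"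
      using \<open>\<epsilon> > 0\<close> \<open>0 \<le> L\<close> by (intro add_less_le_mono) (auto simp: \<eta>_def field_simps)
    finally show "\<bar>(\<Sum>j<n. F (\<gamma> (\<tau> j)) \<bullet> (\<gamma> (t (Suc j)) - \<gamma> (t j))) - (f (\<gamma> b) - f (\<gamma> a))\<bar> < \<epsilon>"
      by simp
  qed
qed

theorem mainTheorem3:
  fixes K :: "'a::euclidean_space set" and f :: "'a \<Rightarrow> real" and F :: "'a \<Rightarrow> 'a"
    and \<gamma> :: "real \<Rightarrow> 'a" and a b :: real
  assumes "compact K"
    and "continuous_on K f" and "continuous_on K F"
    and "a \<le> b" and "continuous_on {a..b} \<gamma>" and "\<gamma> ` {a..b} \<subseteq> K"
    and "rectifiable_path_on a b \<gamma>"
    and "finite {x \<in> \<gamma> ` {a..b}. \<not> (((\<lambda>y. (f y - f x - F x \<bullet> (y - x)) / norm (y - x))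
              \<longlongrightarrow> 0) (at x within K))}"
  shows "has_path_integral F \<gamma> a b (f (\<gamma> b) - f (\<gamma> a))"
proof -
  let ?E = "{x \<in> \<gamma> ` {a..b}. \<not> (((\<lambda>y. (f y - f x - F x \<bullet> (y - x)) / norm (y - x))
              \<longlongrightarrow> 0) (at x within K))}"
  have cont: "continuous_on {a..b} (\<lambda>s. f (\<gamma> s))" "continuous_on {a..b} (\<lambda>s. F (\<gamma> s))"
    using continuous_on_compose2[OF assms(2,5,6)] continuous_on_compose2[OF assms(3,5,6)] by auto
  have gradient: "has_gradient_along f F \<gamma> {a..b} c" if "c \<in> {a..b}" "\<gamma> c \<notin> ?E" for c
  proof (rule has_gradient_along_tendsto[OF _ assms(5,6) that(1) refl])
    show "((\<lambda>y. (f y - f (\<gamma> c) - F (\<gamma> c) \<bullet> (y - \<gamma> c)) / norm (y - \<gamma> c)) \<longlongrightarrow> 0) (at (\<gamma> c) within K)"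
      using that by blast
  qed
  show ?thesis using has_path_integral_gradient[OF assms(5,7) cont assms(8) gradient] .
qed

end
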